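(* Let $\mathcal{S}=(\sigma_{ij})\in\mathrm{SL}(2,\mathbb{Z})$ with $\mathrm{tr}(\mathcal{S})>2$, $\lambda>1$ its larger eigenvalue, and $P=(p_{ij})$ a real matrix with $\det P=1$ and $P\mathcal{S}P^{-1}=\mathrm{diag}(1/\lambda,\lambda)$. For real $c_1,c_2,c_3$ put $$\mathbf{t}_1=\begin{pmatrix}1&p_{11}&c_1\\0&1&p_{21}\\0&0&1\end{pmatrix},\ \mathbf{t}_2=\begin{pmatrix}1&p_{12}&c_2\\0&1&p_{22}\\0&0&1\end{pmatrix},\ \mathbf{t}_3=\begin{pmatrix}1&0&c_3\\0&\lambda&0\\0&0&1\end{pmatrix},\ \mathbf{t}_4^{s}=\begin{pmatrix}1&0&s\\0&1&0\\0&0&1\end{pmatrix}\ (s\in\mathbb{R}).$$ Then for any integers $q\ne0$, $m_1,m_2$ (and any $c_3$) there exist unique real $c_1,c_2$ for which these elements of $\mathrm{Sol}_1^4$ generate a group $\tilde\Gamma_{(\mathcal{S};q,m_1,m_2)}$ with the presentation $$\langle \mathbf{t}_1,\mathbf{t}_2,\mathbf{t}_3,\mathbf{t}_4^{1/q}\mid [\mathbf{t}_1,\mathbf{t}_2]=\mathbf{t}_4,\ \mathbf{t}_4\text{ central},\ \mathbf{t}_3\mathbf{t}_1\mathbf{t}_3^{-1}=\mathbf{t}_1^{\sigma_{11}}\mathbf{t}_2^{\sigma_{21}}\mathbf{t}_4^{m_1/q},\ \mathbf{t}_3\mathbf{t}_2\mathbf{t}_3^{-1}=\mathbf{t}_1^{\sigma_{12}}\mathbf{t}_2^{\sigma_{22}}\mathbf{t}_4^{m_2/q}\rangle;$$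 that is, unique $c_1,c_2$ for which the last two relations hold.
   Context: $\mathrm{Sol}_1^4$ is the group of real matrices $\begin{pmatrix}1&x&z\\0&e^u&y\\0&0&1\end{pmatrix}$. *)

theory Defs
  imports "HOL-Analysis.Analysis"
begin

fun mat_pow :: "real^'n^'n \<Rightarrow> nat \<Rightarrow> real^'n^'n" where
  "mat_pow A 0 = mat 1"
| "mat_pow A (Suc n) = A ** mat_pow A n"

definition mat_zpow :: "real^'n^'n \<Rightarrow> int \<Rightarrow> real^'n^'n" where
  "mat_zpow A k = (if 0 \<le> k then mat_pow A (nat k) else mat_pow (matrix_inv A) (nat (- k)))"

definition mat3 :: "real \<Rightarrow> real \<Rightarrow> real \<Rightarrow> real \<Rightarrow> real \<Rightarrow> real \<Rightarrow> real \<Rightarrow> real \<Rightarrow> real \<Rightarrow> real^3^3" where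
  "mat3 a11 a12 a13 a21 a22 a23 a31 a32 a33 =
     vector [vector [a11, a12, a13], vector [a21, a22, a23], vector [a31, a32, a33]]"

definition sol :: "real \<Rightarrow> real \<Rightarrow> real \<Rightarrow> real \<Rightarrow> real^3^3" where
  "sol x y z u = mat3 1 x z 0 (exp u) y 0 0 1"

definition t4 :: "real \<Rightarrow> real^3^3" where
  "t4 s = sol 0 0 s 0"

definition real_mat :: "int^'n^'m \<Rightarrow> real^'n^'m" where
  "real_mat S = (\<chi> i j. real_of_int (S $ i $ j))"

definition is_eigenvalue :: "real^'n^'n \<Rightarrow> real \<Rightarrow> bool" where
  "is_eigenvalue A \<mu> \<longleftrightarrow> (\<exists>v. v \<noteq> 0 \<and> A *v v = \<mu> *s v)"

definition commutator :: "real^'n^'n \<Rightarrow> real^'n^'n \<Rightarrow> real^'n^'n" where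
  "commutator a b = a ** b ** matrix_inv a ** matrix_inv b"

end

theory Submission
  imports Defs
begin

text \<open>
  The elements t1, t2 lie in the real Heisenberg group of unipotent matrices
  heis x y z, and det P = 1 makes their commutator exactly t4 1; centrality of t4 is
  immediate. Conjugation by t3 rescales the Heisenberg coordinates (x, y, z) to
  (x/\<lambda>, \<lambda> y, z), and the intertwining relation P S = diag(1/\<lambda>, \<lambda>) P says precisely
  that the (x, y)-coordinates on both sides of the two conjugation relations agree.
  What remains are the z-coordinates, an affine system c = S' c + K in (c1, c2), S' the
  transpose of S. Its matrix I - S' has determinant 1 - tr S + det S = 2 - tr S \<noteq> 0, so it has a
  unique solution.
\<close>

lemma mat3_eq_iff:
  "mat3 a11 a12 a13 a21 a22 a23 a31 a32 a33 = mat3 b11 b12 b13 b21 b22 b23 b31 b32 b33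
    \<longleftrightarrow> a11 = b11 \<and> a12 = b12 \<and> a13 = b13 \<and> a21 = b21 \<and> a22 = b22 \<and> a23 = b23
        \<and> a31 = b31 \<and> a32 = b32 \<and> a33 = b33"
  by (auto simp: mat3_def vec_eq_iff forall_3)

lemma mat3_mult:
  "mat3 a11 a12 a13 a21 a22 a23 a31 a32 a33 ** mat3 b11 b12 b13 b21 b22 b23 b31 b32 b33
    = mat3 (a11*b11 + a12*b21 + a13*b31) (a11*b12 + a12*b22 + a13*b32) (a11*b13 + a12*b23 + a13*b33)
           (a21*b11 + a22*b21 + a23*b31) (a21*b12 + a22*b22 + a23*b32) (a21*b13 + a22*b23 + a23*b33)
           (a31*b11 + a32*b21 + a33*b31) (a31*b12 + a32*b22 + a33*b32) (a31*b13 + a32*b23 + a33*b33)"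
  by (simp add: mat3_def vec_eq_iff forall_3 matrix_matrix_mult_def sum_3)

lemma mat_1_eq_mat3: "mat 1 = mat3 1 0 0 0 1 0 0 0 1"
  by (simp add: mat3_def vec_eq_iff forall_3 mat_def)

lemma matrix_inv_eqI:
  fixes A B :: "'a::field^'n^'n"
  assumes "A ** B = mat 1"
  shows "matrix_inv A = B"
proof -
  have BA: "B ** A = mat 1"
    using assms matrix_left_right_inverse by blast
  have "A ** matrix_inv A = mat 1"
    unfolding matrix_inv_def by (rule conjunct1, rule someI[of _ B]) (use assms BA in blast)
  have "matrix_inv A = (B ** A) ** matrix_inv A"
    using BA by simp
  also have "\<dots> = B ** (A ** matrix_inv A)"
    by (simp add: matrix_mul_assoc)
  also have "\<dots> = B"
    using \<open>A ** matrix_inv A = mat 1\<close> by simp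
  finally show ?thesis .
qed

lemma matrix_inv_mult_left:
  fixes A :: "'a::semiring_1^'n^'n"
  assumes "invertible A"
  shows "matrix_inv A ** A = mat 1"
  using assms someI_ex[of "\<lambda>A'. A ** A' = mat 1 \<and> A' ** A = mat 1"]
  unfolding invertible_def matrix_inv_def by blast

lemma conj_eq_imp_mult_eq:
  fixes P A B :: "'a::semiring_1^'n^'n"
  assumes "invertible P" and "P ** A ** matrix_inv P = B"
  shows "P ** A = B ** P"
proof -
  have "P ** A = P ** A ** (matrix_inv P ** P)"
    using matrix_inv_mult_left[OF assms(1)] by simp
  also have "\<dots> = B ** P"
    using assms(2) by (simp add: matrix_mul_assoc)
  finally show ?thesis .
qed

definition heis :: "real \<Rightarrow> real \<Rightarrow> real \<Rightarrow> real^3^3" where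
  "heis x y z = mat3 1 x z 0 1 y 0 0 1"

lemma heis_mult: "heis x y z ** heis x' y' z' = heis (x + x') (y + y') (z + z' + x * y')"
  by (simp add: heis_def mat3_mult mat3_eq_iff)

lemma heis_eq_iff: "heis x y z = heis x' y' z' \<longleftrightarrow> x = x' \<and> y = y' \<and> z = z'"
  by (auto simp: heis_def mat3_eq_iff)

lemma t4_eq_heis: "t4 s = heis 0 0 s"
  by (simp add: t4_def sol_def heis_def)

lemma matrix_inv_heis: "matrix_inv (heis x y z) = heis (- x) (- y) (x * y - z)"
  by (rule matrix_inv_eqI) (simp add: heis_mult, simp add: heis_def mat_1_eq_mat3)

lemma mat_pow_heis:
  "mat_pow (heis x y z) n
     = heis (real n * x) (real n * y) (real n * z + real n * (real n - 1) / 2 * x * y)"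
proof (induction n)
  case 0
  show ?case by (simp add: mat_1_eq_mat3 heis_def)
next
  case (Suc n)
  show ?case by (simp add: Suc heis_mult heis_eq_iff) (simp add: field_simps)
qed

lemma mat_zpow_heis:
  "mat_zpow (heis x y z) k
     = heis (of_int k * x) (of_int k * y) (of_int k * z + of_int k * (of_int k - 1) / 2 * x * y)"
proof (cases "0 \<le> k")
  case True
  then show ?thesis by (simp add: mat_zpow_def mat_pow_heis)
next
  case False
  then have "real (nat (- k)) = - of_int k" by simp
  with False show ?thesis
    by (simp add: mat_zpow_def mat_pow_heis matrix_inv_heis heis_eq_iff) (simp add: field_simps)
qed

lemma commutator_heis:
  "commutator (heis x y z) (heis x' y' z') = heis 0 0 (x * y' - x' * y)"
  by (simp add: commutator_def matrix_inv_heis heis_mult heis_eq_iff) (simp add: algebra_simps)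

definition dil :: "real \<Rightarrow> real \<Rightarrow> real^3^3" where
  "dil c l = mat3 1 0 c 0 l 0 0 0 1"

lemma matrix_inv_dil: "l \<noteq> 0 \<Longrightarrow> matrix_inv (dil c l) = dil (- c) (1 / l)"
  by (rule matrix_inv_eqI) (simp add: dil_def mat3_mult mat_1_eq_mat3)

lemma dil_conj_heis:
  "l \<noteq> 0 \<Longrightarrow> dil c l ** heis x y z ** matrix_inv (dil c l) = heis (x / l) (l * y) z"
  by (simp add: matrix_inv_dil) (simp add: dil_def heis_def mat3_mult mat3_eq_iff)

lemma dil_commute_heis_centre: "dil c l ** heis 0 0 s = heis 0 0 s ** dil c l"
  by (simp add: dil_def heis_def mat3_mult mat3_eq_iff)

lemma dil_conj_relation_iff:
  fixes k1 k2 :: int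
  assumes "l \<noteq> 0"
    and "of_int k1 * x1 + of_int k2 * x2 = x / l"
    and "of_int k1 * y1 + of_int k2 * y2 = l * y"
  shows "dil c l ** heis x y z ** matrix_inv (dil c l)
           = mat_zpow (heis x1 y1 z1) k1 ** mat_zpow (heis x2 y2 z2) k2 ** t4 s
         \<longleftrightarrow> z = of_int k1 * z1 + of_int k2 * z2
               + (of_int k1 * (of_int k1 - 1) / 2 * x1 * y1
                  + of_int k2 * (of_int k2 - 1) / 2 * x2 * y2
                  + of_int k1 * x1 * (of_int k2 * y2) + s)"
  using assms
  by (simp add: dil_conj_heis mat_zpow_heis t4_eq_heis heis_mult heis_eq_iff) (auto simp: algebra_simps)

lemma affine_fixed_point_unique:
  fixes A :: "real^2^2"
  assumes "1 - trace A + det A \<noteq> 0"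
  shows "\<exists>!(x, y). x = A$1$1 * x + A$2$1 * y + k1 \<and> y = A$1$2 * x + A$2$2 * y + k2"
proof -
  define \<Delta> where "\<Delta> = (1 - A$1$1) * (1 - A$2$2) - A$1$2 * A$2$1"
  have "\<Delta> \<noteq> 0"
    using assms by (simp add: \<Delta>_def det_2 trace_def sum_2 algebra_simps)
  have solution_iff: "x = A$1$1 * x + A$2$1 * y + k1 \<and> y = A$1$2 * x + A$2$2 * y + k2
      \<longleftrightarrow> x = (k1 * (1 - A$2$2) + A$2$1 * k2) / \<Delta> \<and> y = ((1 - A$1$1) * k2 + A$1$2 * k1) / \<Delta>"
    for x y
    \<comment> \<open>Cramer's rule\<close>
    using \<open>\<Delta> \<noteq> 0\<close> unfolding \<Delta>_def by (auto simp: field_simps) algebra+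
  show ?thesis
    unfolding solution_iff by auto
qed

lemma presentation_relations_iff:
  fixes P :: "real^2^2" and S :: "int^2^2"
  assumes detP: "det P = 1" and "lam \<noteq> 0"
    and intertwine: "P ** real_mat S = vector [vector [1 / lam, 0], vector [0, lam]] ** P"
  obtains k1 k2 where
    "\<And>c1 c2. (let
            t1 = mat3 1 (P$1$1) c1  0 1 (P$2$1)  0 0 1;
            t2 = mat3 1 (P$1$2) c2  0 1 (P$2$2)  0 0 1;
            t3 = mat3 1 0 c  0 lam 0  0 0 1
          in commutator t1 t2 = t4 1
           \<and> (\<forall>g \<in> {t1, t2, t3}. g ** t4 1 = t4 1 ** g)
           \<and> t3 ** t1 ** matrix_inv t3 = mat_zpow t1 (S$1$1) ** mat_zpow t2 (S$2$1) ** t4 s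
           \<and> t3 ** t2 ** matrix_inv t3 = mat_zpow t1 (S$1$2) ** mat_zpow t2 (S$2$2) ** t4 s')
       \<longleftrightarrow> c1 = of_int (S$1$1) * c1 + of_int (S$2$1) * c2 + k1
         \<and> c2 = of_int (S$1$2) * c1 + of_int (S$2$2) * c2 + k2"
proof -
  have entry: "(P ** real_mat S)$i$j = (vector [vector [1 / lam, 0], vector [0, lam]] ** P)$i$j"
    for i j using intertwine by simp
  have x_coords: "of_int (S$1$j) * P$1$1 + of_int (S$2$j) * P$1$2 = P$1$j / lam" for j
    using entry[of 1 j] by (simp add: matrix_matrix_mult_def sum_2 real_mat_def mult.commute)
  have y_coords: "of_int (S$1$j) * P$2$1 + of_int (S$2$j) * P$2$2 = lam * P$2$j" for j
    using entry[of 2 j] by (simp add: matrix_matrix_mult_def sum_2 real_mat_def mult.commute)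
  have commutator_eq: "commutator (heis (P$1$1) (P$2$1) c1) (heis (P$1$2) (P$2$2) c2) = t4 1" for c1 c2
    using detP by (simp add: commutator_heis t4_eq_heis heis_eq_iff det_2)
  have t4_central: "\<forall>g \<in> {heis (P$1$1) (P$2$1) c1, heis (P$1$2) (P$2$2) c2, dil c lam}.
      g ** t4 1 = t4 1 ** g" for c1 c2
    by (simp add: t4_eq_heis heis_mult dil_commute_heis_centre add.commute)
  show ?thesis
    by (rule that, unfold heis_def[symmetric] dil_def[symmetric] Let_def)
      (simp add: commutator_eq t4_central dil_conj_relation_iff[OF \<open>lam \<noteq> 0\<close> x_coords y_coords])
qed

theorem lemma5p2:
  fixes S :: "int^2^2" and lam :: real and P :: "real^2^2"
    and q m1 m2 :: int and c3 :: real
  assumes SL2: "det S = 1"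
    and tr: "trace S > 2"
    and lam_gt: "lam > 1"
    and lam_eig: "is_eigenvalue (real_mat S) lam"
    and lam_larger: "\<forall>\<mu>. is_eigenvalue (real_mat S) \<mu> \<longrightarrow> \<mu> \<le> lam"
    and detP: "det P = 1"
    and diag: "P ** real_mat S ** matrix_inv P = vector [vector [1 / lam, 0], vector [0, lam]]"
    and q: "q \<noteq> 0"
  shows "\<exists>!(c1, c2). (let
            t1 = mat3 1 (P$1$1) c1  0 1 (P$2$1)  0 0 1;
            t2 = mat3 1 (P$1$2) c2  0 1 (P$2$2)  0 0 1;
            t3 = mat3 1 0 c3  0 lam 0  0 0 1
          in commutator t1 t2 = t4 1
           \<and> (\<forall>g \<in> {t1, t2, t3}. g ** t4 1 = t4 1 ** g)
           \<and> t3 ** t1 ** matrix_inv t3 =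
               mat_zpow t1 (S$1$1) ** mat_zpow t2 (S$2$1) ** t4 (real_of_int m1 / real_of_int q)
           \<and> t3 ** t2 ** matrix_inv t3 =
               mat_zpow t1 (S$1$2) ** mat_zpow t2 (S$2$2) ** t4 (real_of_int m2 / real_of_int q))"
proof -
  have "invertible P"
    using detP by (simp add: invertible_det_nz)
  then have intertwine: "P ** real_mat S = vector [vector [1 / lam, 0], vector [0, lam]] ** P"
    using diag by (rule conj_eq_imp_mult_eq)
  have "lam \<noteq> 0"
    using lam_gt by simp
  have "real_of_int (1 - trace S + det S) \<noteq> 0"
    using SL2 tr by simp
  then have "1 - trace (real_mat S) + det (real_mat S) \<noteq> 0"
    by (simp add: det_2 trace_def sum_2 real_mat_def)
  note unique = affine_fixed_point_unique[OF this]
  show ?thesis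
    by (rule presentation_relations_iff[OF detP \<open>lam \<noteq> 0\<close> intertwine, where c = c3
          and s = "real_of_int m1 / real_of_int q" and s' = "real_of_int m2 / real_of_int q"])
      (use unique in \<open>simp add: real_mat_def\<close>)
qed

end
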